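(* Let $P(Y)\in R[Y]$ be $m$-triangular and let $Q(Y)\in R[Y]$ be linear. Then: (0) for every $q\in\mathbb{Q}_+$, $qP(Y)$ is $m$-triangular and $qQ(Y)$ is linear; (1) if $\deg P(Y)\ge a+1$, then $P'(Y)$ is $m$-triangular; (2) if $Q(Y)$ is nonconstant, then $Q'(Y)$ is linear; (3) $P(Y)Q(Y)$ is $(m+1)$-triangular.
   Context: Fix a positive integer $a$ and variables $u_0,\ldots,u_a$. Let $R=\mathbb{C}[u_0,\ldots,u_{a-1}][u_a,u_a^{-1}]$. $\mathbb{Q}_+$ denotes the positive rational numbers. For an integer $m\ge1$, a polynomial $P(Y)=\sum_{l=0}^dp_lY^l\in R[Y]$ of degree $d\ge a$ is called $m$-triangular if for every $l$ with $d-a\le l\le d$ one has $p_l=q_lu_a^{m-1}u_{a-d+l}+P_l(u_{a-d+l+1},\ldots,u_a)$ for some $q_l\in\mathbb{Q}_+$ and some polynomial $P_l\in\mathbb{C}[u_{a-d+l+1},\ldots,u_a]$ (for $l=d$ this means $p_d=q_du_a^m$). A polynomial $P(Y)=\sum_{l=0}^dp_lY^l\in R[Y]$ is called linear (or $U$-linear) if $0\le d=\deg P(Y)\le a$ and $p_l\in\mathbb{Q}_+u_{a-d+l}$ for all $l\in\{0,\ldots,d\}$. Derivatives are with respect to $Y$. *)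

theory Defs
  imports "HOL-Library.Poly_Mapping" "HOL-Computational_Algebra.Polynomial"
begin

text \<open>Elements of the Laurent polynomial ring C[u_0,...,u_a, u_a^(-1)] are modelled as
  finitely supported maps from integer exponent vectors (variable index to exponent)
  to complex coefficients.\<close>

type_synonym lpoly = "(nat \<Rightarrow>\<^sub>0 int) \<Rightarrow>\<^sub>0 complex"

definition U :: "nat \<Rightarrow> lpoly" where
  "U i = Poly_Mapping.single (Poly_Mapping.single i 1) 1"

definition Qc :: "rat \<Rightarrow> lpoly" where
  "Qc q = Poly_Mapping.single 0 (of_rat q)"

definition in_R :: "nat \<Rightarrow> lpoly \<Rightarrow> bool" where
  "in_R a f \<longleftrightarrow> (\<forall>mon \<in> Poly_Mapping.keys f. \<forall>i.
      (a < i \<longrightarrow> Poly_Mapping.lookup mon i = 0) \<and> (i < a \<longrightarrow> 0 \<le> Poly_Mapping.lookup mon i))"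

definition in_CU :: "nat \<Rightarrow> nat \<Rightarrow> lpoly \<Rightarrow> bool" where
  "in_CU j a f \<longleftrightarrow> (\<forall>mon \<in> Poly_Mapping.keys f. \<forall>i.
      0 \<le> Poly_Mapping.lookup mon i \<and> ((i < j \<or> a < i) \<longrightarrow> Poly_Mapping.lookup mon i = 0))"

definition in_RY :: "nat \<Rightarrow> lpoly poly \<Rightarrow> bool" where
  "in_RY a P \<longleftrightarrow> (\<forall>l. in_R a (coeff P l))"

definition triangular :: "nat \<Rightarrow> nat \<Rightarrow> lpoly poly \<Rightarrow> bool" where
  "triangular a m P \<longleftrightarrow> in_RY a P \<and> a \<le> Polynomial.degree P \<and>
     (\<forall>l. Polynomial.degree P - a \<le> l \<and> l < Polynomial.degree P \<longrightarrow>
        (\<exists>q::rat. 0 < q \<and> (\<exists>Pl. in_CU (a + l + 1 - Polynomial.degree P) a Pl \<and>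
            coeff P l = Qc q * U a ^ (m - 1) * U (a + l - Polynomial.degree P) + Pl))) \<and>
     (\<exists>q::rat. 0 < q \<and> coeff P (Polynomial.degree P) = Qc q * U a ^ m)"

definition U_linear :: "nat \<Rightarrow> lpoly poly \<Rightarrow> bool" where
  "U_linear a Q \<longleftrightarrow> Polynomial.degree Q \<le> a \<and>
     (\<forall>l \<le> Polynomial.degree Q. \<exists>q::rat. 0 < q \<and>
        coeff Q l = Qc q * U (a + l - Polynomial.degree Q))"

end

theory Submission
  imports Defs
begin

text \<open>Write d = deg P, e = deg Q and call x a positive multiple of M modulo C[u_j..u_a] if
  x = c M + R with c a positive rational and R a polynomial in u_j, ..., u_a.  Re-indexing by
  t = d - l, m-triangularity says that for 1 \<le> t \<le> a the coefficient p_(d-t) is a positive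
  multiple of u_a^(m-1) u_(a-t) modulo C[u_(a-t+1)..u_a], and linearity that q_(e-s) is a positive
  rational multiple of u_(a-s).  This shape survives multiplication by positive rationals, in
  particular by the integer factors produced by differentiation.  For the product, the coefficient
  of Y^(d+e-t) is the sum over s of q_(e-s) p_(d-t+s): the term s = 0 is a positive multiple of
  u_a^m u_(a-t), the term s = t a nonnegative multiple of it, the terms 0 < s < t lie in
  C[u_(a-t+1)..u_a], and the terms s > t vanish.  Degrees behave as expected because the
  coefficient ring is an integral domain of characteristic 0.\<close>

definition CU_monomial :: "nat \<Rightarrow> nat \<Rightarrow> (nat \<Rightarrow>\<^sub>0 int) \<Rightarrow> bool" where
  "CU_monomial j a mon \<longleftrightarrow> (\<forall>i. 0 \<le> Poly_Mapping.lookup mon i \<and>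
     ((i < j \<or> a < i) \<longrightarrow> Poly_Mapping.lookup mon i = 0))"

definition R_monomial :: "nat \<Rightarrow> (nat \<Rightarrow>\<^sub>0 int) \<Rightarrow> bool" where
  "R_monomial a mon \<longleftrightarrow> (\<forall>i. (a < i \<longrightarrow> Poly_Mapping.lookup mon i = 0) \<and>
     (i < a \<longrightarrow> 0 \<le> Poly_Mapping.lookup mon i))"

lemma in_CU_iff_keys: "in_CU j a f \<longleftrightarrow> Poly_Mapping.keys f \<subseteq> Collect (CU_monomial j a)"
  by (auto simp: in_CU_def CU_monomial_def)

lemma in_R_iff_keys: "in_R a f \<longleftrightarrow> Poly_Mapping.keys f \<subseteq> Collect (R_monomial a)"
  by (auto simp: in_R_def R_monomial_def)

lemma keys_add_subset:
  "Poly_Mapping.keys f \<subseteq> S \<Longrightarrow> Poly_Mapping.keys g \<subseteq> S \<Longrightarrow> Poly_Mapping.keys (f + g) \<subseteq> S"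
  using keys_add[of f g] by blast

lemma keys_mult_subset:
  fixes f g :: "('a::monoid_add \<Rightarrow>\<^sub>0 'b::semiring_0)"
  assumes "Poly_Mapping.keys f \<subseteq> S" "Poly_Mapping.keys g \<subseteq> S"
    and "\<And>x y. x \<in> S \<Longrightarrow> y \<in> S \<Longrightarrow> x + y \<in> S"
  shows "Poly_Mapping.keys (f * g) \<subseteq> S"
  using assms keys_mult[of f g] by blast

lemma in_CU_0: "in_CU j a 0"
  by (simp add: in_CU_def)

lemma in_CU_add: "in_CU j a f \<Longrightarrow> in_CU j a g \<Longrightarrow> in_CU j a (f + g)"
  unfolding in_CU_iff_keys by (rule keys_add_subset)

lemma in_CU_mult: "in_CU j a f \<Longrightarrow> in_CU j a g \<Longrightarrow> in_CU j a (f * g)"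
  unfolding in_CU_iff_keys by (rule keys_mult_subset) (auto simp: CU_monomial_def lookup_add)

lemma in_CU_1: "in_CU j a 1"
  by (simp add: in_CU_def)

lemma in_CU_power: "in_CU j a f \<Longrightarrow> in_CU j a (f ^ n)"
  by (induction n) (simp_all add: in_CU_1 in_CU_mult)

lemma in_CU_mono: "j' \<le> j \<Longrightarrow> in_CU j a f \<Longrightarrow> in_CU j' a f"
  unfolding in_CU_def using order.strict_trans2 by blast

lemma in_CU_Qc: "in_CU j a (Qc q)"
  by (simp add: Qc_def in_CU_def)

lemma in_CU_U: "j \<le> i \<Longrightarrow> i \<le> a \<Longrightarrow> in_CU j a (U i)"
  by (auto simp: in_CU_def U_def lookup_single when_def)

lemma in_R_if_in_CU: "in_CU j a f \<Longrightarrow> in_R a f"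
  unfolding in_CU_def in_R_def by auto

lemma in_R_add: "in_R a f \<Longrightarrow> in_R a g \<Longrightarrow> in_R a (f + g)"
  unfolding in_R_iff_keys by (rule keys_add_subset)

lemma in_R_mult: "in_R a f \<Longrightarrow> in_R a g \<Longrightarrow> in_R a (f * g)"
  unfolding in_R_iff_keys by (rule keys_mult_subset) (auto simp: R_monomial_def lookup_add)

lemma in_R_sum: "(\<And>i. i \<in> S \<Longrightarrow> in_R a (f i)) \<Longrightarrow> in_R a (sum f S)"
  by (induction S rule: infinite_finite_induct) (auto intro: in_R_add in_R_if_in_CU in_CU_0)

lemma in_RY_mult: "in_RY a P \<Longrightarrow> in_RY a Q \<Longrightarrow> in_RY a (P * Q)"
  unfolding in_RY_def coeff_mult by (auto intro!: in_R_sum in_R_mult)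

lemma in_RY_if_coeffs_scaled:
  "in_RY a P \<Longrightarrow> (\<And>l. coeff P' l = Qc (c l) * coeff P (f l)) \<Longrightarrow> in_RY a P'"
  unfolding in_RY_def by (simp add: in_R_mult in_R_if_in_CU[OF in_CU_Qc])

lemma Qc_mult: "Qc (q * r) = Qc q * Qc r"
  by (simp add: Qc_def mult_single of_rat_mult)

lemma Qc_add: "Qc (q + r) = Qc q + Qc r"
  by (simp add: Qc_def single_add of_rat_add)

lemma Qc_eq_0_iff [simp]: "Qc q = 0 \<longleftrightarrow> q = 0"
proof
  assume "Qc q = 0"
  then have "Poly_Mapping.lookup (Qc q) 0 = 0" by simp
  then show "q = 0" by (simp add: Qc_def)
qed (simp add: Qc_def)

lemma Qc_0 [simp]: "Qc 0 = 0"
  by simp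

lemma of_nat_eq_Qc: "of_nat n = Qc (of_nat n)"
  by (metis Qc_def of_rat_of_nat_eq single_of_nat)

lemma U_neq_0 [simp]: "U i \<noteq> 0"
proof
  assume "U i = 0"
  then have "Poly_Mapping.lookup (U i) (Poly_Mapping.single i 1) = 0" by simp
  then show False by (simp add: U_def)
qed

definition pos_multiple_mod_CU :: "nat \<Rightarrow> nat \<Rightarrow> lpoly \<Rightarrow> lpoly \<Rightarrow> bool" where
  "pos_multiple_mod_CU j a M x \<longleftrightarrow> (\<exists>c>0. \<exists>R. in_CU j a R \<and> x = Qc c * M + R)"

definition nonneg_multiple_mod_CU :: "nat \<Rightarrow> nat \<Rightarrow> lpoly \<Rightarrow> lpoly \<Rightarrow> bool" where
  "nonneg_multiple_mod_CU j a M x \<longleftrightarrow> (\<exists>c\<ge>0. \<exists>R. in_CU j a R \<and> x = Qc c * M + R)"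

lemma nonneg_multiple_if_in_CU: "in_CU j a x \<Longrightarrow> nonneg_multiple_mod_CU j a M x"
  unfolding nonneg_multiple_mod_CU_def by (intro exI[of _ 0]) simp

lemma nonneg_multiple_add:
  assumes "nonneg_multiple_mod_CU j a M x" "nonneg_multiple_mod_CU j a M y"
  shows "nonneg_multiple_mod_CU j a M (x + y)"
proof -
  from assms obtain c R c' R' where "c \<ge> 0" "in_CU j a R" "x = Qc c * M + R"
    "c' \<ge> 0" "in_CU j a R'" "y = Qc c' * M + R'"
    unfolding nonneg_multiple_mod_CU_def by blast
  then show ?thesis unfolding nonneg_multiple_mod_CU_def
    by (intro exI[of _ "c + c'"] conjI exI[of _ "R + R'"])
      (auto intro: in_CU_add simp: Qc_add algebra_simps)
qed

lemma nonneg_multiple_sum: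
  "(\<And>i. i \<in> S \<Longrightarrow> nonneg_multiple_mod_CU j a M (f i)) \<Longrightarrow> nonneg_multiple_mod_CU j a M (sum f S)"
  by (induction S rule: infinite_finite_induct)
    (auto intro: nonneg_multiple_add nonneg_multiple_if_in_CU in_CU_0)

lemma pos_multiple_add_nonneg:
  assumes "pos_multiple_mod_CU j a M x" "nonneg_multiple_mod_CU j a M y"
  shows "pos_multiple_mod_CU j a M (x + y)"
proof -
  from assms obtain c R c' R' where "c > 0" "in_CU j a R" "x = Qc c * M + R"
    "c' \<ge> 0" "in_CU j a R'" "y = Qc c' * M + R'"
    unfolding pos_multiple_mod_CU_def nonneg_multiple_mod_CU_def by blast
  then show ?thesis unfolding pos_multiple_mod_CU_def
    by (intro exI[of _ "c + c'"] conjI exI[of _ "R + R'"])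
      (auto intro: in_CU_add simp: Qc_add algebra_simps)
qed

lemma pos_multiple_mult:
  assumes "pos_multiple_mod_CU j a M x" "0 < q" "in_CU j a N"
  shows "pos_multiple_mod_CU j a (N * M) (Qc q * N * x)"
proof -
  from assms(1) obtain c R where "c > 0" "in_CU j a R" "x = Qc c * M + R"
    unfolding pos_multiple_mod_CU_def by blast
  with assms(2,3) show ?thesis unfolding pos_multiple_mod_CU_def
    by (intro exI[of _ "q * c"] conjI exI[of _ "Qc q * N * R"])
      (auto intro: in_CU_mult in_CU_Qc simp: Qc_mult algebra_simps)
qed

lemma pos_multiple_scale:
  "pos_multiple_mod_CU j a M x \<Longrightarrow> 0 < q \<Longrightarrow> pos_multiple_mod_CU j a M (Qc q * x)"
  using pos_multiple_mult[of j a M x q 1] by (simp add: in_CU_def)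

lemma pos_multiple_mono:
  "j' \<le> j \<Longrightarrow> pos_multiple_mod_CU j a M x \<Longrightarrow> pos_multiple_mod_CU j' a M x"
  unfolding pos_multiple_mod_CU_def by (blast intro: in_CU_mono)

lemma in_CU_if_pos_multiple:
  "pos_multiple_mod_CU j a M x \<Longrightarrow> in_CU j a M \<Longrightarrow> in_CU j a x"
  unfolding pos_multiple_mod_CU_def by (auto intro: in_CU_add in_CU_mult in_CU_Qc)

lemma all_top_indices_iff:
  fixes a d :: nat
  assumes "a \<le> d"
  shows "(\<forall>l. d - a \<le> l \<and> l < d \<longrightarrow> \<Phi> l) \<longleftrightarrow> (\<forall>t\<in>{1..a}. \<Phi> (d - t))"
proof
  assume "\<forall>t\<in>{1..a}. \<Phi> (d - t)"
  moreover have "d - l \<in> {1..a}" "d - (d - l) = l" if "d - a \<le> l" "l < d" for l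
    using that assms by auto
  ultimately show "\<forall>l. d - a \<le> l \<and> l < d \<longrightarrow> \<Phi> l" by metis
qed (use assms in auto)

lemma triangular_iff:
  "triangular a m P \<longleftrightarrow> in_RY a P \<and> a \<le> degree P \<and>
     (\<forall>t\<in>{1..a}. pos_multiple_mod_CU (Suc (a - t)) a (U a ^ (m - 1) * U (a - t))
        (coeff P (degree P - t))) \<and>
     (\<exists>q>0. lead_coeff P = Qc q * U a ^ m)"
proof -
  define d where "d = degree P"
  have "(\<forall>l. d - a \<le> l \<and> l < d \<longrightarrow>
      pos_multiple_mod_CU (a + l + 1 - d) a (U a ^ (m - 1) * U (a + l - d)) (coeff P l)) \<longleftrightarrow>
    (\<forall>t\<in>{1..a}. pos_multiple_mod_CU (Suc (a - t)) a (U a ^ (m - 1) * U (a - t)) (coeff P (d - t)))"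
    if "a \<le> d"
    unfolding all_top_indices_iff[OF that] using that by (intro ball_cong) (auto simp: Suc_diff_le)
  then show ?thesis
    unfolding triangular_def pos_multiple_mod_CU_def d_def[symmetric] by (auto simp: mult.assoc)
qed

lemma U_linear_iff:
  "U_linear a Q \<longleftrightarrow> degree Q \<le> a \<and>
     (\<forall>t\<le>degree Q. \<exists>q>0. coeff Q (degree Q - t) = Qc q * U (a - t))"
proof -
  have "a + (degree Q - t) - degree Q = a - t" "degree Q - (degree Q - t) = t"
    if "t \<le> degree Q" for t using that by auto
  then show ?thesis unfolding U_linear_def
    by (metis diff_le_self le_add_diff_inverse2 add_diff_cancel_right')
qed

lemma in_RY_if_U_linear:
  assumes "U_linear a Q"
  shows "in_RY a Q"
  unfolding in_RY_def
proof
  fix l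
  show "in_R a (coeff Q l)"
  proof (cases "l \<le> degree Q")
    case True
    then obtain q where "coeff Q l = Qc q * U (a + l - degree Q)"
      using assms unfolding U_linear_def by blast
    moreover have "in_CU 0 a (Qc q * U (a + l - degree Q))"
      using True by (intro in_CU_mult in_CU_Qc in_CU_U) auto
    ultimately show ?thesis by (simp add: in_R_if_in_CU)
  next
    case False
    then show ?thesis by (simp add: coeff_eq_0 in_R_if_in_CU[OF in_CU_0])
  qed
qed

lemma coeff_pderiv_from_top:
  "t < degree p \<Longrightarrow> coeff (pderiv p) (degree p - 1 - t) = of_nat (degree p - t) * coeff p (degree p - t)"
  by (simp add: coeff_pderiv Suc_diff_Suc)

lemma triangular_smult:
  assumes T: "triangular a m P" and q: "0 < q"
  shows "triangular a m (smult (Qc q) P)"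
proof -
  from T obtain q0 where "0 < q0" "lead_coeff P = Qc q0 * U a ^ m"
    unfolding triangular_iff by blast
  with q have "0 < q * q0" "lead_coeff (smult (Qc q) P) = Qc (q * q0) * U a ^ m"
    by (simp_all add: Qc_mult mult.assoc)
  with T q show ?thesis
    unfolding triangular_iff by (auto intro: pos_multiple_scale in_RY_if_coeffs_scaled)
qed

lemma U_linear_smult:
  assumes L: "U_linear a Q" and q: "0 < q"
  shows "U_linear a (smult (Qc q) Q)"
  unfolding U_linear_iff
proof (intro conjI allI impI)
  show "degree (smult (Qc q) Q) \<le> a" using L q by (simp add: U_linear_iff)
  fix t assume "t \<le> degree (smult (Qc q) Q)"
  then obtain q' where "0 < q'" "coeff Q (degree Q - t) = Qc q' * U (a - t)"
    using L q unfolding U_linear_iff by auto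
  with q show "\<exists>q''>0. coeff (smult (Qc q) Q) (degree (smult (Qc q) Q) - t) = Qc q'' * U (a - t)"
    by (intro exI[of _ "q * q'"]) (simp add: Qc_mult mult.assoc)
qed

lemma triangular_pderiv:
  assumes T: "triangular a m P" and deg: "a + 1 \<le> degree P"
  shows "triangular a m (pderiv P)"
proof -
  define d where "d = degree P"
  have deg': "degree (pderiv P) = d - 1" by (simp add: degree_pderiv d_def)
  have coeff_top: "coeff (pderiv P) (d - 1 - t) = Qc (of_nat (d - t)) * coeff P (d - t)"
    if "t \<le> a" for t
    using coeff_pderiv_from_top[of t P] that deg by (simp add: d_def of_nat_eq_Qc)
  from T obtain q0 where q0: "0 < q0" "coeff P d = Qc q0 * U a ^ m"
    unfolding triangular_iff d_def by blast
  have "in_RY a (pderiv P)"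
    using T unfolding triangular_iff
    by (auto intro: in_RY_if_coeffs_scaled simp: coeff_pderiv of_nat_eq_Qc)
  moreover have "pos_multiple_mod_CU (Suc (a - t)) a (U a ^ (m - 1) * U (a - t))
      (coeff (pderiv P) (d - 1 - t))" if t: "t \<in> {1..a}" for t
  proof -
    have "pos_multiple_mod_CU (Suc (a - t)) a (U a ^ (m - 1) * U (a - t)) (coeff P (d - t))"
      using T t unfolding triangular_iff d_def by blast
    moreover have "0 < (of_nat (d - t) :: rat)" using t deg d_def by simp
    ultimately show ?thesis
      using coeff_top[of t] t by (simp add: pos_multiple_scale)
  qed
  moreover have "coeff (pderiv P) (d - 1) = Qc (of_nat d * q0) * U a ^ m"
    using coeff_top[of 0] q0 by (simp add: Qc_mult mult.assoc)
  moreover have "0 < (of_nat d * q0 :: rat)" using q0 deg d_def by simp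
  ultimately show ?thesis
    using T deg unfolding triangular_iff deg' d_def by auto
qed

lemma U_linear_pderiv:
  assumes L: "U_linear a Q" and deg: "1 \<le> degree Q"
  shows "U_linear a (pderiv Q)"
  unfolding U_linear_iff degree_pderiv
proof (intro conjI allI impI)
  show "degree Q - 1 \<le> a" using L by (auto simp: U_linear_iff)
  fix t assume t: "t \<le> degree Q - 1"
  then have "t \<le> degree Q" by simp
  then obtain q where "0 < q" "coeff Q (degree Q - t) = Qc q * U (a - t)"
    using L unfolding U_linear_iff by blast
  moreover have "coeff (pderiv Q) (degree Q - 1 - t) = Qc (of_nat (degree Q - t)) * coeff Q (degree Q - t)"
    using coeff_pderiv_from_top[of t Q] t deg by (simp add: of_nat_eq_Qc)
  moreover have "0 < (of_nat (degree Q - t) :: rat)" using t deg by simp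
  ultimately show "\<exists>q>0. coeff (pderiv Q) (degree Q - 1 - t) = Qc q * U (a - t)"
    by (intro exI[of _ "of_nat (degree Q - t) * q"]) (simp add: Qc_mult mult.assoc)
qed

lemma coeff_mult_top_terms:
  fixes p q :: "'a::comm_semiring_0 poly"
  assumes "degree q \<le> k"
  shows "coeff (p * q) k = (\<Sum>s\<le>degree q. coeff q (degree q - s) * coeff p (k - degree q + s))"
proof -
  define e where "e = degree q"
  have "coeff (p * q) k = (\<Sum>j\<le>k. coeff q j * coeff p (k - j))"
    by (simp add: mult.commute[of p] coeff_mult)
  also have "\<dots> = (\<Sum>j\<le>e. coeff q j * coeff p (k - j))"
    by (rule sum.mono_neutral_right) (use assms in \<open>auto simp: e_def coeff_eq_0\<close>)
  also have "\<dots> = (\<Sum>s\<le>e. coeff q (e - s) * coeff p (k - (e - s)))"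
    using sum.atLeastAtMost_rev[of "\<lambda>j. coeff q j * coeff p (k - j)" 0 e]
    by (simp add: atLeast0AtMost)
  also have "\<dots> = (\<Sum>s\<le>e. coeff q (e - s) * coeff p (k - e + s))"
    using assms by (intro sum.cong) (auto simp: e_def)
  finally show ?thesis by (simp add: e_def)
qed

lemma triangular_mult_leading_term:
  assumes m: "1 \<le> m" and T: "triangular a m P" and L: "U_linear a Q" and t: "t \<in> {1..a}"
  shows "pos_multiple_mod_CU (Suc (a - t)) a (U a ^ m * U (a - t))
    (coeff Q (degree Q) * coeff P (degree P - t))"
proof -
  obtain q where q: "0 < q" "coeff Q (degree Q) = Qc q * U a"
    using L unfolding U_linear_iff by fastforce
  have U_a_power: "U a * (U a ^ (m - 1) * U (a - t)) = U a ^ m * U (a - t)"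
    using m by (cases m) (simp_all add: mult.assoc)
  have "pos_multiple_mod_CU (Suc (a - t)) a (U a ^ (m - 1) * U (a - t)) (coeff P (degree P - t))"
    using T t unfolding triangular_iff by blast
  then have "pos_multiple_mod_CU (Suc (a - t)) a (U a * (U a ^ (m - 1) * U (a - t)))
      (Qc q * U a * coeff P (degree P - t))"
    using q(1) t by (intro pos_multiple_mult in_CU_U) auto
  then show ?thesis unfolding U_a_power q(2) .
qed

lemma triangular_mult_lower_term:
  assumes T: "triangular a m P" and L: "U_linear a Q" and t: "t \<in> {1..a}"
    and s: "1 \<le> s" "s \<le> degree Q"
  shows "nonneg_multiple_mod_CU (Suc (a - t)) a (U a ^ m * U (a - t))
    (coeff Q (degree Q - s) * coeff P (degree P - t + s))"
proof -
  define d where "d = degree P"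
  have ad: "a \<le> d" using T unfolding triangular_iff d_def by blast
  obtain q where q: "0 < q" "coeff Q (degree Q - s) = Qc q * U (a - s)"
    using L s unfolding U_linear_iff by blast
  consider "s < t" | "s = t" | "t < s" by linarith
  then show ?thesis
  proof cases
    case 1
    \<comment> \<open>both factors only involve the variables u_(a-t+1), ..., u_a\<close>
    have ts: "t - s \<in> {1..a}" and idx: "d - (t - s) = d - t + s"
      using t 1 ad by auto
    have "pos_multiple_mod_CU (Suc (a - (t - s))) a (U a ^ (m - 1) * U (a - (t - s)))
        (coeff P (d - (t - s)))"
      using T ts unfolding triangular_iff d_def by blast
    then have "pos_multiple_mod_CU (Suc (a - t)) a (U a ^ (m - 1) * U (a - (t - s)))
        (coeff P (d - t + s))"
      unfolding idx by (rule pos_multiple_mono[rotated]) (use ts in auto)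
    moreover have "in_CU (Suc (a - t)) a (U a ^ (m - 1) * U (a - (t - s)))"
      using t s 1 by (intro in_CU_mult in_CU_power in_CU_U) auto
    ultimately have "in_CU (Suc (a - t)) a (coeff P (d - t + s))"
      by (rule in_CU_if_pos_multiple)
    moreover have "in_CU (Suc (a - t)) a (Qc q * U (a - s))"
      using t 1 by (intro in_CU_mult in_CU_Qc in_CU_U) auto
    ultimately show ?thesis
      unfolding q(2) d_def by (simp add: nonneg_multiple_if_in_CU in_CU_mult)
  next
    case 2
    obtain q0 where "0 < q0" "coeff P d = Qc q0 * U a ^ m"
      using T unfolding triangular_iff d_def by blast
    with q 2 ad t show ?thesis
      unfolding nonneg_multiple_mod_CU_def d_def[symmetric]
      by (intro exI[of _ "q * q0"] conjI exI[of _ 0])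
        (auto simp: in_CU_0 Qc_mult algebra_simps)
  next
    case 3
    then have "coeff P (d - t + s) = 0" using ad t by (simp add: coeff_eq_0 d_def)
    then show ?thesis by (simp add: d_def nonneg_multiple_if_in_CU in_CU_0)
  qed
qed

lemma triangular_mult_coeff:
  assumes m: "1 \<le> m" and T: "triangular a m P" and L: "U_linear a Q" and t: "t \<in> {1..a}"
  shows "pos_multiple_mod_CU (Suc (a - t)) a (U a ^ m * U (a - t))
    (coeff (P * Q) (degree P + degree Q - t))"
proof -
  define e where "e = degree Q"
  have "a \<le> degree P" using T unfolding triangular_iff by blast
  then have "coeff (P * Q) (degree P + e - t) =
      (\<Sum>s\<le>e. coeff Q (e - s) * coeff P (degree P - t + s))"
    using t by (subst coeff_mult_top_terms) (auto simp: e_def)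
  also have "\<dots> = coeff Q e * coeff P (degree P - t) +
      (\<Sum>s\<in>{1..e}. coeff Q (e - s) * coeff P (degree P - t + s))"
  proof -
    have "{..e} = insert 0 {1..e}" by auto
    then show ?thesis by simp
  qed
  finally show ?thesis
    unfolding e_def
    using triangular_mult_leading_term[OF m T L t] triangular_mult_lower_term[OF T L t]
    by (auto intro!: pos_multiple_add_nonneg nonneg_multiple_sum)
qed

lemma triangular_mult:
  assumes m: "1 \<le> m" and T: "triangular a m P" and L: "U_linear a Q"
  shows "triangular a (m + 1) (P * Q)"
proof -
  obtain q0 where q0: "0 < q0" "lead_coeff P = Qc q0 * U a ^ m"
    using T unfolding triangular_iff by blast
  obtain q1 where q1: "0 < q1" "lead_coeff Q = Qc q1 * U a"
    using L unfolding U_linear_iff by fastforce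
  have "P \<noteq> 0" "Q \<noteq> 0" using q0 q1 by auto
  then have deg: "degree (P * Q) = degree P + degree Q" by (rule degree_mult_eq)
  have "lead_coeff (P * Q) = Qc (q0 * q1) * U a ^ (m + 1)"
    by (simp add: lead_coeff_mult q0(2) q1(2) Qc_mult algebra_simps)
  moreover have "in_RY a (P * Q)"
    using T L unfolding triangular_iff by (auto intro: in_RY_mult in_RY_if_U_linear)
  moreover have "a \<le> degree P" using T unfolding triangular_iff by blast
  ultimately show ?thesis
    using q0 q1 triangular_mult_coeff[OF m T L] unfolding triangular_iff[of a "m + 1"] deg
    by (intro conjI exI[of _ "q0 * q1"]) auto
qed

theorem mainTheorem4:
  fixes a m :: nat and P Q :: "lpoly poly"
  assumes "1 \<le> a" and "1 \<le> m"
    and "triangular a m P" and "U_linear a Q"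
  shows "(\<forall>q::rat. 0 < q \<longrightarrow> triangular a m (smult (Qc q) P) \<and> U_linear a (smult (Qc q) Q))
    \<and> (a + 1 \<le> Polynomial.degree P \<longrightarrow> triangular a m (pderiv P))
    \<and> (1 \<le> Polynomial.degree Q \<longrightarrow> U_linear a (pderiv Q))
    \<and> triangular a (m + 1) (P * Q)"
  using assms triangular_smult U_linear_smult triangular_pderiv U_linear_pderiv triangular_mult
  by blast

end
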